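(* Let $n$ be the number of validators and $f\in[0,n]$, and allow checkpoints to be finalized also via acknowledgment messages. If two conflicting chains are finalized according to any two respective views, then at least $\frac{n}{3}$ validators can be detected (from the messages in those views) to have violated either $\mathbf{E_1}$, $\mathbf{E_2}$, or $\mathbf{E_3}$.
   Context: Chains are identified with their last block (a block is $(b,p)$ with $p$ its slot, genesis $B_{\text{genesis}}$ has slot $-1$); $\chi.p$ is the slot of the last block; $\preceq$ is the prefix relation; chains conflict if neither is a prefix of the other. A view is a set of messages. Checkpoints $\mathcal{C}=(\chi,c)$. An FFG-vote $\mathcal{C}_1\to\mathcal{C}_2$ (carried in VOTE messages) is valid iff $\mathcal{C}_1.c<\mathcal{C}_2.c$ and $\mathcal{C}_1.\chi\preceq\mathcal{C}_2.\chi$. In a view $\mathcal{V}$: $\mathcal{C}$ is justified iff $\mathcal{C}=(B_{\text{genesis}},0)$ or there are VOTE messages in $\mathcal{V}$ from at least $\frac{2}{3}n$ distinct validators with valid FFG-votes $\mathcal{S}\to\mathcal{T}$, $\mathcal{S}$ justified in $\mathcal{V}$, $\mathcal{S}.\chi\preceq\mathcal{C}.\chi\preceq\mathcal{T}.\chi$, $\mathcal{T}.c=\mathcal{C}.c$. $\mathcal{C}$ is finalized iff (i) $\mathcal{C}=(B_{\text{genesis}},0)$, or (ii) $\mathcal{C}$ is justified and there are VOTE messages from at least $\frac{2}{3}n$ distinct validators with valid FFG-votes $\mathcal{C}\to\mathcal{T}$, $\mathcal{T}.c=\mathcal{C}.c+1$, or (iii) (finalization via acknowledgments) $\mathcal{C}$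 is justified and $\mathcal{V}$ contains acknowledgment messages $[\textsc{ack},\mathcal{C},t,v_i]$ (where $\mathcal{C}.c=t$) from at least $\frac{2}{3}n$ distinct validators. A chain is finalized according to $\mathcal{V}$ iff it is a prefix of the chain of a checkpoint finalized in $\mathcal{V}$. Preorder: $\mathcal{C}\le\mathcal{C}'$ iff $\mathcal{C}.c<\mathcal{C}'.c$ or ($\mathcal{C}.c=\mathcal{C}'.c$ and $\mathcal{C}.\chi.p\le\mathcal{C}'.\chi.p$); $<$ its strict part. Slashing conditions: for two distinct FFG-votes $\mathcal{C}_1\to\mathcal{C}_2$, $\mathcal{C}_3\to\mathcal{C}_4$ sent by the same validator, $\mathbf{E_1}$: $\mathcal{C}_2.c=\mathcal{C}_4.c$; $\mathbf{E_2}$: $\mathcal{C}_3<\mathcal{C}_1$ and $\mathcal{C}_2.c<\mathcal{C}_4.c$. $\mathbf{E_3}$: a validator has sent an FFG-vote $\mathcal{C}_1\to\mathcal{C}_2$ and an acknowledgment for $\mathcal{C}_a$ with $\mathcal{C}_1<\mathcal{C}_a$ and $\mathcal{C}_a.c<\mathcal{C}_2.c$. *)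

theory Defs
  imports Complex_Main "HOL-Library.Sublist" "HOL-Library.Cardinality"
begin

text \<open>A block is a pair (b, p) with content b and slot p. A chain is identified
with its last block; we represent it by the list of its blocks after the genesis
block (which is implicit, has slot -1, and corresponds to the empty list).\<close>

typedef 'b chain = "{xs :: ('b \<times> nat) list. sorted_wrt (\<lambda>a b. snd a < snd b) xs}"
  by (rule exI[of _ "[]"]) simp

definition genesis :: "'b chain" where
  "genesis = Abs_chain []"

definition slot :: "'b chain \<Rightarrow> int" where
  "slot ch = (if Rep_chain ch = [] then -1 else int (snd (last (Rep_chain ch))))"

definition chain_prefix :: "'b chain \<Rightarrow> 'b chain \<Rightarrow> bool" where
  "chain_prefix a b \<longleftrightarrow> prefix (Rep_chain a) (Rep_chain b)"

definition conflicting :: "'b chain \<Rightarrow> 'b chain \<Rightarrow> bool" where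
  "conflicting a b \<longleftrightarrow> \<not> chain_prefix a b \<and> \<not> chain_prefix b a"

type_synonym 'b checkpoint = "'b chain \<times> nat"

abbreviation cp_chain :: "'b checkpoint \<Rightarrow> 'b chain" where "cp_chain C \<equiv> fst C"
abbreviation cp_epoch :: "'b checkpoint \<Rightarrow> nat" where "cp_epoch C \<equiv> snd C"

definition genesis_cp :: "'b checkpoint" where
  "genesis_cp = (genesis, 0)"

datatype ('v, 'b) msg =
    Vote 'v "'b checkpoint" "'b checkpoint"
  | Ack 'v "'b checkpoint" nat

type_synonym ('v, 'b) view = "('v, 'b) msg set"

definition valid_ffg :: "'b checkpoint \<Rightarrow> 'b checkpoint \<Rightarrow> bool" where
  "valid_ffg S T \<longleftrightarrow> cp_epoch S < cp_epoch T \<and> chain_prefix (cp_chain S) (cp_chain T)"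

text \<open>Validators are the elements of the finite type 'v; n = CARD('v).
"At least 2/3 n" is written 3 * card W \<ge> 2 * n.\<close>

inductive justified :: "('v::finite, 'b) view \<Rightarrow> 'b checkpoint \<Rightarrow> bool"
  for V :: "('v, 'b) view" where
  just_genesis: "justified V genesis_cp"
| just_votes: "\<lbrakk> 3 * card W \<ge> 2 * CARD('v);
     \<forall>v\<in>W. \<exists>S T. Vote v S T \<in> V \<and> valid_ffg S T \<and> justified V S
        \<and> chain_prefix (cp_chain S) (cp_chain C) \<and> chain_prefix (cp_chain C) (cp_chain T)
        \<and> cp_epoch T = cp_epoch C \<rbrakk> \<Longrightarrow> justified V C"

definition finalized :: "('v::finite, 'b) view \<Rightarrow> 'b checkpoint \<Rightarrow> bool" where
  "finalized V C \<longleftrightarrow>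
     C = genesis_cp
   \<or> (justified V C \<and> (\<exists>W. 3 * card W \<ge> 2 * CARD('v) \<and>
        (\<forall>v\<in>W. \<exists>T. Vote v C T \<in> V \<and> valid_ffg C T \<and> cp_epoch T = cp_epoch C + 1)))
   \<or> (justified V C \<and> (\<exists>W. 3 * card W \<ge> 2 * CARD('v) \<and>
        (\<forall>v\<in>W. Ack v C (cp_epoch C) \<in> V)))"

definition chain_finalized :: "('v::finite, 'b) view \<Rightarrow> 'b chain \<Rightarrow> bool" where
  "chain_finalized V ch \<longleftrightarrow> (\<exists>C. finalized V C \<and> chain_prefix ch (cp_chain C))"

definition cp_le :: "'b checkpoint \<Rightarrow> 'b checkpoint \<Rightarrow> bool" where
  "cp_le C C' \<longleftrightarrow> cp_epoch C < cp_epoch C'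
     \<or> (cp_epoch C = cp_epoch C' \<and> slot (cp_chain C) \<le> slot (cp_chain C'))"

definition cp_less :: "'b checkpoint \<Rightarrow> 'b checkpoint \<Rightarrow> bool" where
  "cp_less C C' \<longleftrightarrow> cp_le C C' \<and> \<not> cp_le C' C"

definition violates_E1 :: "('v, 'b) view \<Rightarrow> 'v \<Rightarrow> bool" where
  "violates_E1 M v \<longleftrightarrow> (\<exists>C1 C2 C3 C4. Vote v C1 C2 \<in> M \<and> Vote v C3 C4 \<in> M
     \<and> (C1, C2) \<noteq> (C3, C4) \<and> cp_epoch C2 = cp_epoch C4)"

definition violates_E2 :: "('v, 'b) view \<Rightarrow> 'v \<Rightarrow> bool" where
  "violates_E2 M v \<longleftrightarrow> (\<exists>C1 C2 C3 C4. Vote v C1 C2 \<in> M \<and> Vote v C3 C4 \<in> M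
     \<and> (C1, C2) \<noteq> (C3, C4) \<and> cp_less C3 C1 \<and> cp_epoch C2 < cp_epoch C4)"

definition violates_E3 :: "('v, 'b) view \<Rightarrow> 'v \<Rightarrow> bool" where
  "violates_E3 M v \<longleftrightarrow> (\<exists>C1 C2 Ca t. Vote v C1 C2 \<in> M \<and> Ack v Ca t \<in> M
     \<and> cp_epoch Ca = t \<and> cp_less C1 Ca \<and> cp_epoch Ca < cp_epoch C2)"

definition slashable :: "('v, 'b) view \<Rightarrow> 'v \<Rightarrow> bool" where
  "slashable M v \<longleftrightarrow> violates_E1 M v \<or> violates_E2 M v \<or> violates_E3 M v"

end

theory Submission
  imports Defs
begin

text \<open>Take finalized conflicting checkpoints A (in V1) and B (in V2) with A.c \<le> B.c.
If A.c = B.c, the two justifying quorums intersect in a third of the validators, each of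
whom voted twice for the same target epoch (E1). Otherwise, follow the justification of B
backwards: each justified checkpoint J with A.c < J.c not extending A has a quorum of
votes S \<rightarrow> T with T.c = J.c, intersecting the quorum finalizing A. Either one of
these sources S is not below A, and we recurse on S (or end in the equal-epoch case), or all
of them are, so every vote in the intersection surrounds A: it violates E1 or E2 against the
vote A \<rightarrow> (A.c + 1), or E3 against the acknowledgment of A.\<close>

definition third_slashable :: "('v::finite, 'b) view \<Rightarrow> bool" where
  "third_slashable M \<longleftrightarrow> (\<exists>W :: 'v set. 3 * card W \<ge> CARD('v) \<and> (\<forall>v\<in>W. slashable M v))"

lemma third_slashable_sym: "third_slashable (V1 \<union> V2) = third_slashable (V2 \<union> V1)"
  by (simp add: Un_commute)

lemma third_slashable_if_quorums_slashable:
  fixes W1 W2 :: "'v::finite set"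
  assumes "3 * card W1 \<ge> 2 * CARD('v)" "3 * card W2 \<ge> 2 * CARD('v)"
    and "\<forall>v\<in>W1 \<inter> W2. slashable M v"
  shows "third_slashable M"
proof -
  have "card W1 + card W2 = card (W1 \<union> W2) + card (W1 \<inter> W2)"
    by (rule card_Un_Int) auto
  moreover have "card (W1 \<union> W2) \<le> CARD('v)"
    by (rule card_mono) auto
  ultimately have "3 * card (W1 \<inter> W2) \<ge> CARD('v)"
    using assms(1,2) by linarith
  then show ?thesis
    using assms(3) unfolding third_slashable_def by blast
qed

lemma Rep_chain_genesis: "Rep_chain genesis = []"
  unfolding genesis_def by (simp add: Abs_chain_inverse)

lemma chain_prefix_genesis: "chain_prefix genesis ch"
  by (simp add: chain_prefix_def Rep_chain_genesis)

lemma chain_prefix_trans: "chain_prefix a b \<Longrightarrow> chain_prefix b c \<Longrightarrow> chain_prefix a c"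
  unfolding chain_prefix_def by (metis prefix_order.order_trans)

lemma conflicting_sym: "conflicting a b \<longleftrightarrow> conflicting b a"
  unfolding conflicting_def by blast

lemma conflicting_extend:
  assumes "conflicting a b" "chain_prefix a A" "chain_prefix b B"
  shows "conflicting A B"
  using assms unfolding conflicting_def chain_prefix_def
  by (meson prefix_order.order_trans prefix_same_cases)

lemma conflicting_not_genesis_cp:
  assumes "conflicting (cp_chain C) ch"
  shows "C \<noteq> genesis_cp"
  using assms by (auto simp: genesis_cp_def conflicting_def chain_prefix_genesis)

lemma conflicting_common_extension:
  assumes "conflicting a b" "chain_prefix a c"
  shows "\<not> chain_prefix b c"
  using assms unfolding conflicting_def chain_prefix_def
  by (meson prefix_same_cases)

lemma chain_prefix_slot_le_eq:
  assumes "chain_prefix a b" "slot b \<le> slot a"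
  shows "a = b"
proof (rule ccontr)
  assume "a \<noteq> b"
  obtain zs where b: "Rep_chain b = Rep_chain a @ zs"
    using assms(1) unfolding chain_prefix_def prefix_def by auto
  with \<open>a \<noteq> b\<close> have "zs \<noteq> []"
    by (metis Rep_chain_inject append_Nil2)
  have sorted: "sorted_wrt (\<lambda>x y. snd x < snd y) (Rep_chain b)"
    using Rep_chain by auto
  have "slot a < slot b"
  proof (cases "Rep_chain a = []")
    case True
    then show ?thesis using \<open>zs \<noteq> []\<close> b unfolding slot_def by simp
  next
    case False
    then have "snd (last (Rep_chain a)) < snd (last zs)"
      using sorted b \<open>zs \<noteq> []\<close> by (simp add: sorted_wrt_append last_in_set)
    then show ?thesis using False \<open>zs \<noteq> []\<close> b unfolding slot_def by simp
  qed
  with assms(2) show False by simp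
qed

lemma link_surrounded_slashable:
  assumes "Vote v C T' \<in> M" "cp_epoch T' = cp_epoch C + 1"
    and "Vote v S T \<in> M" "cp_less S C" "cp_epoch C < cp_epoch T"
  shows "slashable M v"
proof -
  have distinct: "(C, T') \<noteq> (S, T)"
    using assms(4) by (auto simp: cp_less_def)
  show ?thesis
  proof (cases "cp_epoch T = cp_epoch T'")
    case True
    then have "violates_E1 M v"
      unfolding violates_E1_def using assms(1,3) distinct by blast
    then show ?thesis by (simp add: slashable_def)
  next
    case False
    then have "violates_E2 M v"
      unfolding violates_E2_def using assms distinct by fastforce
    then show ?thesis by (simp add: slashable_def)
  qed
qed

lemma ack_surrounded_slashable:
  assumes "Ack v C (cp_epoch C) \<in> M" "Vote v S T \<in> M" "cp_less S C" "cp_epoch C < cp_epoch T"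
  shows "slashable M v"
  using assms unfolding slashable_def violates_E3_def by blast

lemma finalized_guarding_quorum:
  fixes V1 V2 :: "('v::finite, 'b) view"
  assumes "finalized V1 Cf" "Cf \<noteq> genesis_cp"
  obtains Wf :: "'v set" where "3 * card Wf \<ge> 2 * CARD('v)"
    and "\<And>v S T. v \<in> Wf \<Longrightarrow> Vote v S T \<in> V2 \<Longrightarrow> cp_less S Cf \<Longrightarrow> cp_epoch Cf < cp_epoch T
       \<Longrightarrow> slashable (V1 \<union> V2) v"
proof -
  consider (link) W where "3 * card W \<ge> 2 * CARD('v)"
      "\<forall>v\<in>W. \<exists>T. Vote v Cf T \<in> V1 \<and> cp_epoch T = cp_epoch Cf + 1"
    | (ack) W where "3 * card W \<ge> 2 * CARD('v)" "\<forall>v\<in>W. Ack v Cf (cp_epoch Cf) \<in> V1"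
    using assms unfolding finalized_def by blast
  then show thesis
  proof cases
    case link
    show thesis
    proof (rule that[OF link(1)])
      fix v S T
      assume "v \<in> W" "Vote v S T \<in> V2" "cp_less S Cf" "cp_epoch Cf < cp_epoch T"
      moreover obtain T' where "Vote v Cf T' \<in> V1" "cp_epoch T' = cp_epoch Cf + 1"
        using link(2) \<open>v \<in> W\<close> by blast
      ultimately show "slashable (V1 \<union> V2) v"
        by (intro link_surrounded_slashable[of v Cf T']) auto
    qed
  next
    case ack
    then show thesis
      by (intro that[of W]) (auto intro: ack_surrounded_slashable)
  qed
qed

lemma justified_nongenesis_quorum:
  fixes V :: "('v::finite, 'b) view"
  assumes "justified V C" "C \<noteq> genesis_cp"
  obtains W :: "'v set" where "3 * card W \<ge> 2 * CARD('v)"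
    and "\<forall>v\<in>W. \<exists>S T. Vote v S T \<in> V \<and> valid_ffg S T \<and> justified V S
        \<and> chain_prefix (cp_chain S) (cp_chain C) \<and> chain_prefix (cp_chain C) (cp_chain T)
        \<and> cp_epoch T = cp_epoch C"
  using assms by (cases rule: justified.cases) auto

lemma conflicting_justified_same_epoch:
  fixes V1 V2 :: "('v::finite, 'b) view"
  assumes "justified V1 A" "justified V2 B" "cp_epoch A = cp_epoch B"
    and "conflicting (cp_chain A) (cp_chain B)"
  shows "third_slashable (V1 \<union> V2)"
proof -
  obtain W1 :: "'v set" where W1: "3 * card W1 \<ge> 2 * CARD('v)"
    "\<forall>v\<in>W1. \<exists>S T. Vote v S T \<in> V1 \<and> valid_ffg S T \<and> justified V1 S
        \<and> chain_prefix (cp_chain S) (cp_chain A) \<and> chain_prefix (cp_chain A) (cp_chain T)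
        \<and> cp_epoch T = cp_epoch A"
    by (rule justified_nongenesis_quorum[OF assms(1) conflicting_not_genesis_cp[OF assms(4)]])
  obtain W2 :: "'v set" where W2: "3 * card W2 \<ge> 2 * CARD('v)"
    "\<forall>v\<in>W2. \<exists>S T. Vote v S T \<in> V2 \<and> valid_ffg S T \<and> justified V2 S
        \<and> chain_prefix (cp_chain S) (cp_chain B) \<and> chain_prefix (cp_chain B) (cp_chain T)
        \<and> cp_epoch T = cp_epoch B"
    using assms(4) conflicting_not_genesis_cp conflicting_sym
    by (metis justified_nongenesis_quorum[OF assms(2)])
  have "slashable (V1 \<union> V2) v" if "v \<in> W1 \<inter> W2" for v
  proof -
    obtain S1 T1 S2 T2 where "Vote v S1 T1 \<in> V1" "Vote v S2 T2 \<in> V2"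
      and extends: "chain_prefix (cp_chain A) (cp_chain T1)" "chain_prefix (cp_chain B) (cp_chain T2)"
      and "cp_epoch T1 = cp_epoch T2"
      using W1(2) W2(2) \<open>v \<in> W1 \<inter> W2\<close> assms(3) by fastforce
    moreover have "T1 \<noteq> T2"
      using conflicting_common_extension assms(4) extends by blast
    ultimately have "violates_E1 (V1 \<union> V2) v"
      unfolding violates_E1_def by blast
    then show ?thesis by (simp add: slashable_def)
  qed
  then show ?thesis
    using third_slashable_if_quorums_slashable[OF W1(1) W2(1)] by blast
qed

lemma guarded_justified_not_extending:
  fixes V1 V2 :: "('v::finite, 'b) view" and Wf :: "'v set"
  assumes "justified V1 Cf"
    and "3 * card Wf \<ge> 2 * CARD('v)"
    and guard: "\<And>v S T. v \<in> Wf \<Longrightarrow> Vote v S T \<in> V2 \<Longrightarrow> cp_less S Cf \<Longrightarrow> cp_epoch Cf < cp_epoch T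
       \<Longrightarrow> slashable (V1 \<union> V2) v"
  shows "justified V2 J \<Longrightarrow> cp_epoch Cf < cp_epoch J \<Longrightarrow> \<not> chain_prefix (cp_chain Cf) (cp_chain J)
    \<Longrightarrow> third_slashable (V1 \<union> V2)"
proof (induction "cp_epoch J" arbitrary: J rule: less_induct)
  case less
  have "J \<noteq> genesis_cp"
    using less.prems(2) by (auto simp: genesis_cp_def)
  then obtain WJ :: "'v set" where WJ: "3 * card WJ \<ge> 2 * CARD('v)"
    "\<forall>v\<in>WJ. \<exists>S T. Vote v S T \<in> V2 \<and> valid_ffg S T \<and> justified V2 S
        \<and> chain_prefix (cp_chain S) (cp_chain J) \<and> chain_prefix (cp_chain J) (cp_chain T)
        \<and> cp_epoch T = cp_epoch J"
    by (rule justified_nongenesis_quorum[OF less.prems(1)])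
  show ?case
  proof (cases "\<exists>v\<in>WJ \<inter> Wf. \<exists>S T. Vote v S T \<in> V2 \<and> valid_ffg S T \<and> justified V2 S
        \<and> chain_prefix (cp_chain S) (cp_chain J) \<and> cp_epoch T = cp_epoch J \<and> \<not> cp_less S Cf")
    case True
    then obtain S T where "valid_ffg S T" "justified V2 S"
        "chain_prefix (cp_chain S) (cp_chain J)" "cp_epoch T = cp_epoch J" "\<not> cp_less S Cf"
      by blast
    have S_not_extending: "\<not> chain_prefix (cp_chain Cf) (cp_chain S)"
      using \<open>chain_prefix (cp_chain S) (cp_chain J)\<close> less.prems(3) chain_prefix_trans by blast
    have "cp_epoch S < cp_epoch J"
      using \<open>valid_ffg S T\<close> \<open>cp_epoch T = cp_epoch J\<close> by (simp add: valid_ffg_def)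
    consider "cp_epoch Cf < cp_epoch S"
      | "cp_epoch S = cp_epoch Cf" "slot (cp_chain Cf) \<le> slot (cp_chain S)"
      using \<open>\<not> cp_less S Cf\<close> unfolding cp_less_def cp_le_def by linarith
    then show ?thesis
    proof cases
      case 1
      then show ?thesis
        using less.hyps \<open>cp_epoch S < cp_epoch J\<close> \<open>justified V2 S\<close> S_not_extending by blast
    next
      case 2
      then have "\<not> chain_prefix (cp_chain S) (cp_chain Cf)"
        using S_not_extending chain_prefix_slot_le_eq by fastforce
      then have "conflicting (cp_chain Cf) (cp_chain S)"
        using S_not_extending by (simp add: conflicting_def)
      then show ?thesis
        using conflicting_justified_same_epoch[OF assms(1) \<open>justified V2 S\<close>] 2 by simp
    qed
  next
    case False
    have "slashable (V1 \<union> V2) v" if "v \<in> WJ \<inter> Wf" for v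
    proof -
      obtain S T where "Vote v S T \<in> V2" "valid_ffg S T" "justified V2 S"
        "chain_prefix (cp_chain S) (cp_chain J)" "cp_epoch T = cp_epoch J"
        using WJ(2) \<open>v \<in> WJ \<inter> Wf\<close> by blast
      with False \<open>v \<in> WJ \<inter> Wf\<close> have "cp_less S Cf" by blast
      then show ?thesis
        using guard \<open>v \<in> WJ \<inter> Wf\<close> \<open>Vote v S T \<in> V2\<close> \<open>cp_epoch T = cp_epoch J\<close> less.prems(2)
        by simp
    qed
    then show ?thesis
      using third_slashable_if_quorums_slashable[OF WJ(1) assms(2)] by blast
  qed
qed

lemma finalized_conflicting_justified:
  fixes V1 V2 :: "('v::finite, 'b) view"
  assumes "finalized V1 A" "justified V2 B" "cp_epoch A \<le> cp_epoch B"
    and "conflicting (cp_chain A) (cp_chain B)"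
  shows "third_slashable (V1 \<union> V2)"
proof -
  have "A \<noteq> genesis_cp"
    using conflicting_not_genesis_cp assms(4) by blast
  then have "justified V1 A"
    using assms(1) by (auto simp: finalized_def)
  obtain Wf :: "'v set" where quorum: "3 * card Wf \<ge> 2 * CARD('v)"
    and guard: "\<And>v S T. v \<in> Wf \<Longrightarrow> Vote v S T \<in> V2 \<Longrightarrow> cp_less S A \<Longrightarrow> cp_epoch A < cp_epoch T
       \<Longrightarrow> slashable (V1 \<union> V2) v"
    using finalized_guarding_quorum[OF assms(1) \<open>A \<noteq> genesis_cp\<close>] by blast
  show ?thesis
  proof (cases "cp_epoch A = cp_epoch B")
    case True
    then show ?thesis
      using conflicting_justified_same_epoch \<open>justified V1 A\<close> assms(2,4) by blast
  next
    case False
    then show ?thesis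
      using guarded_justified_not_extending[OF \<open>justified V1 A\<close> quorum guard assms(2)] assms(3,4)
      by (simp add: conflicting_def)
  qed
qed

theorem lemmaB1:
  fixes V1 V2 :: "('v::finite, 'b) view"
    and ch1 ch2 :: "'b chain"
    and f :: real
  assumes "0 \<le> f" and "f \<le> real CARD('v)"
    and "chain_finalized V1 ch1"
    and "chain_finalized V2 ch2"
    and "conflicting ch1 ch2"
  shows "\<exists>W :: 'v set. 3 * card W \<ge> CARD('v) \<and> (\<forall>v\<in>W. slashable (V1 \<union> V2) v)"
proof -
  obtain A where A: "finalized V1 A" "chain_prefix ch1 (cp_chain A)"
    using assms(3) by (auto simp: chain_finalized_def)
  obtain B where B: "finalized V2 B" "chain_prefix ch2 (cp_chain B)"
    using assms(4) by (auto simp: chain_finalized_def)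
  have conflict: "conflicting (cp_chain A) (cp_chain B)"
    using conflicting_extend[OF assms(5) A(2) B(2)] .
  have "justified V1 A" "justified V2 B"
    using A(1) B(1) conflict conflicting_not_genesis_cp conflicting_sym
    by (metis finalized_def)+
  have "third_slashable (V1 \<union> V2)"
  proof (cases "cp_epoch A \<le> cp_epoch B")
    case True
    then show ?thesis
      using finalized_conflicting_justified A(1) \<open>justified V2 B\<close> conflict by blast
  next
    case False
    then show ?thesis
      using finalized_conflicting_justified[OF B(1) \<open>justified V1 A\<close>] conflict
      by (simp add: conflicting_sym third_slashable_sym)
  qed
  then show ?thesis
    unfolding third_slashable_def .
qed

end
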